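(* Let $m\geq 3$ be odd, $n=3m$, and let $\mathcal{L}_n$ be the latin square defined below. Every transversal of $\mathcal{L}_n$ contains at least one entry of the block $A_{11}$.
   Context: A latin square of order $n$ is viewed as its set of entries $(r,c,s)$ (symbol $s$ in row $r$, column $c$); a transversal is a set of $n$ entries containing each row, column and symbol exactly once. Let $m\ge3$ be odd and $n=3m$. The latin square $\mathcal{L}_n$ has rows, columns and symbols in $\{0,1,\dots,n-1\}$ and is partitioned into nine $m\times m$ blocks $A_{ij}$, $i,j\in\{1,2,3\}$: for $a,b\in\{0,\dots,m-1\}$, the cell in row $(i-1)m+a$ and column $(j-1)m+b$ contains $A_{ij}[a,b]$. Writing $t$ for the residue of $a+b$ modulo $m$ in $\{0,\dots,m-1\}$, $A_{ij}[a,b]=t$ if $t\neq 0$ and $i+j\equiv 2\pmod 3$; $A_{ij}[a,b]=t+m$ if $t\neq m-1$ and $i+j\equiv 0\pmod 3$; $A_{ij}[a,b]=t+2m$ if $t\neq m-1$ and $i+j\equiv1\pmod3$; $A_{ij}[a,b]=0$ if $t=0$ and $(i,j)=(1,1)$; $A_{ij}[a,b]=2m-1$ if $t=0$ and $(i,j)=(2,3)$; $A_{ij}[a,b]=3m-1$ if $t=0$ and $(i,j)=(3,2)$; $A_{ij}[a,b]=0$ if $t=m-1$ and $(i,j)\in\{(2,2),(3,3)\}$; $A_{ij}[a,b]=2m-1$ if $t=m-1$ and $(i,j)\in\{(1,2),(3,1)\}$; $A_{ij}[a,b]=3m-1$ if $t=m-1$ and $(i,j)\in\{(1,3),(2,1)\}$.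 An entry of $\mathcal{L}_n$ is said to be in block $A_{ij}$ if its cell lies in that block. *)

theory Defs
  imports Main
begin

text \<open>Entry of block A_ij at local position (a,b), for blocks i,j in {1,2,3}.\<close>
definition blockval :: "nat \<Rightarrow> nat \<Rightarrow> nat \<Rightarrow> nat \<Rightarrow> nat \<Rightarrow> nat" where
  "blockval m i j a b =
    (let t = (a + b) mod m in
     if (i + j) mod 3 = 2 then (if t \<noteq> 0 then t
        else if (i, j) = (1, 1) then 0
        else if (i, j) = (2, 3) then 2*m - 1
        else 3*m - 1)
     else if (i + j) mod 3 = 0 then (if t \<noteq> m - 1 then t + m
        else if (i, j) = (1, 2) \<or> (i, j) = (3, 1) then 2*m - 1
        else if (i, j) = (2, 1) \<or> (i, j) = (1, 3) then 3*m - 1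
        else 0)
     else (if t \<noteq> m - 1 then t + 2*m
        else if (i, j) = (2, 2) \<or> (i, j) = (3, 3) then 0
        else if (i, j) = (1, 2) \<or> (i, j) = (3, 1) then 2*m - 1
        else 3*m - 1))"

definition Lsym :: "nat \<Rightarrow> nat \<Rightarrow> nat \<Rightarrow> nat" where
  "Lsym m r c = blockval m (r div m + 1) (c div m + 1) (r mod m) (c mod m)"

definition Lsq :: "nat \<Rightarrow> (nat \<times> nat \<times> nat) set" where
  "Lsq m = {(r, c, Lsym m r c) | r c. r < 3*m \<and> c < 3*m}"

definition is_transversal :: "nat \<Rightarrow> (nat \<times> nat \<times> nat) set \<Rightarrow> (nat \<times> nat \<times> nat) set \<Rightarrow> bool" where
  "is_transversal n L T \<longleftrightarrow> T \<subseteq> L \<and> finite T \<and> card T = n \<and>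
     (\<forall>x<n. \<exists>!e\<in>T. fst e = x) \<and>
     (\<forall>x<n. \<exists>!e\<in>T. fst (snd e) = x) \<and>
     (\<forall>x<n. \<exists>!e\<in>T. snd (snd e) = x)"

definition in_block :: "nat \<Rightarrow> nat \<Rightarrow> nat \<Rightarrow> nat \<times> nat \<times> nat \<Rightarrow> bool" where
  "in_block m i j e \<longleftrightarrow> fst e div m + 1 = i \<and> fst (snd e) div m + 1 = j"

end

theory Submission
  imports Defs
begin

text \<open>Suppose a transversal T avoids A11. Its entry with symbol 0 lies in A22 or A33,
  on a cell with r + c \<equiv> -1 (mod m). The symbols 1, ..., m-1 occur only in A11, A23
  and A32, while a count of the first block row and column leaves room for at most m-1
  entries of T in A23 \<union> A32; so these symbols fill A23 \<union> A32, where they equal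
  (r + c) mod m. Every remaining entry satisfies s \<equiv> r + c (mod m). Summing over T
  gives S \<equiv> 2S + 1 (mod m) for S = 0 + ... + (3m-1) = 3m(3m-1)/2, which m divides
  as m is odd; hence m = 1.\<close>

lemma bij_betw_lessThan_if_card_eq:
  assumes "finite T" "card T = n" "\<forall>x<n. \<exists>e\<in>T. g e = x"
  shows "bij_betw g T {..<n}"
proof -
  have "{..<n} \<subseteq> g ` T" using assms(3) by force
  moreover have "card (g ` T) \<le> card {..<n}" using card_image_le[OF assms(1)] assms(2) by simp
  ultimately have image: "g ` T = {..<n}" using card_seteq by (metis finite_imageI assms(1))
  then have "inj_on g T" using assms(1,2) by (simp add: inj_on_iff_eq_card)
  with image show ?thesis by (simp add: bij_betw_def)
qed

lemma transversal_bij_betw: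
  assumes "is_transversal n L T"
  shows transversal_bij_betw_row: "bij_betw fst T {..<n}"
    and transversal_bij_betw_col: "bij_betw (\<lambda>e. fst (snd e)) T {..<n}"
    and transversal_bij_betw_sym: "bij_betw (\<lambda>e. snd (snd e)) T {..<n}"
  using assms unfolding is_transversal_def
  by (auto intro!: bij_betw_lessThan_if_card_eq)

lemma card_bij_betw_preimage:
  assumes "bij_betw g T B" "A \<subseteq> B"
  shows "card {e\<in>T. g e \<in> A} = card A"
proof -
  have "bij_betw g {e\<in>T. g e \<in> A} A"
    using assms unfolding bij_betw_def by (auto intro: inj_on_subset)
  then show ?thesis by (rule bij_betw_same_card)
qed

lemma dvd_sum_lessThan_three_times:
  assumes "odd (m::nat)" shows "m dvd (\<Sum>i<3*m. i)"
proof -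
  obtain q where q: "m = 2*q + 1" using assms oddE by blast
  have "(\<Sum>i<3*m. i) = 3*m * (3*m - 1) div 2"
    using Sum_Ico_nat[of 0 "3*m"] by (simp add: lessThan_atLeast0)
  also have "\<dots> = m * (3 * (3*q + 1))" unfolding q by (simp add: algebra_simps)
  finally show ?thesis by simp
qed

lemma mult_minus_one_mod:
  fixes k m :: nat
  assumes "0 < k" "0 < m"
  shows "(k * m - 1) mod m = m - 1"
proof -
  have "k * m - 1 = (m - 1) + (k - 1) * m"
    using assms by (cases k) (simp_all add: algebra_simps)
  then have "(k * m - 1) mod m = (m - 1) mod m" by (simp only: mod_mult_self1)
  then show ?thesis using assms by simp
qed

lemma transversal_sum_mod:
  assumes T: "is_transversal n L T" and dvd: "m dvd (\<Sum>i<n. i)" and "e0 \<in> T"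
    and cong: "\<forall>e\<in>T. (fst e + fst (snd e) + (if e = e0 then 1 else 0)) mod m = snd (snd e) mod m"
  shows "m = 1"
proof -
  define S where "S = (\<Sum>i<n. i)"
  have "finite T" using T by (simp add: is_transversal_def)
  have "(\<Sum>e\<in>T. fst e + fst (snd e) + (if e = e0 then 1 else 0)) = S + S + 1"
    using sum.reindex_bij_betw[OF transversal_bij_betw_row[OF T], of id]
      sum.reindex_bij_betw[OF transversal_bij_betw_col[OF T], of id]
      \<open>e0 \<in> T\<close> \<open>finite T\<close>
    by (simp add: sum.distrib S_def)
  moreover have "(\<Sum>e\<in>T. snd (snd e)) = S"
    using sum.reindex_bij_betw[OF transversal_bij_betw_sym[OF T], of id] by (simp add: S_def)
  moreover have "(\<Sum>e\<in>T. fst e + fst (snd e) + (if e = e0 then 1 else 0)) mod m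
      = (\<Sum>e\<in>T. snd (snd e)) mod m"
    using cong by (metis (no_types, lifting) mod_sum_eq sum.cong)
  ultimately have "(S + S + 1) mod m = S mod m" by simp
  with dvd have "m dvd 1" unfolding S_def by (metis dvd_add dvd_add_right_iff dvd_eq_mod_eq_0)
  then show ?thesis by simp
qed

text \<open>Block indices are 0-based from here on: the cell (r, c) lies in A_ij
  iff (r div m, c div m) = (i - 1, j - 1).\<close>

lemma Lsym_cases:
  assumes "r < 3*m" "c < 3*m"
  obtains i j where "i \<in> {0,1,2}" "j \<in> {0,1,2}" "r div m = i" "c div m = j"
    "Lsym m r c = blockval m (i+1) (j+1) (r mod m) (c mod m)"
proof -
  have "r div m < 3" "c div m < 3" using assms by (auto simp: div_less_iff_less_mult)
  then have "r div m \<in> {0,1,2}" "c div m \<in> {0,1,2}" by auto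
  then show ?thesis using that by (simp add: Lsym_def)
qed

lemma block_of_Lsym_eq_0:
  assumes "r < 3*m" "c < 3*m" "Lsym m r c = 0"
  shows "r div m = c div m \<and> (r div m \<noteq> 0 \<longrightarrow> (r + c) mod m = m - 1)"
proof -
  have "m > 0" using assms by simp
  obtain i j where "i \<in> {0,1,2}" "j \<in> {0,1,2}" "r div m = i" "c div m = j"
    "blockval m (i+1) (j+1) (r mod m) (c mod m) = 0"
    using Lsym_cases assms by metis
  then show ?thesis using \<open>m > 0\<close>
    by (elim insertE emptyE) (simp_all add: blockval_def Let_def mod_add_eq split: if_splits)
qed

lemma block_of_Lsym_less:
  assumes "r < 3*m" "c < 3*m" "0 < Lsym m r c" "Lsym m r c < m"
  shows "(r div m, c div m) \<in> {(0,0),(1,2),(2,1)}"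
proof -
  obtain i j where "i \<in> {0,1,2}" "j \<in> {0,1,2}" "r div m = i" "c div m = j"
    "Lsym m r c = blockval m (i+1) (j+1) (r mod m) (c mod m)"
    using Lsym_cases assms(1,2) by metis
  then show ?thesis using assms(3,4)
    by (elim insertE emptyE) (simp_all add: blockval_def Let_def split: if_splits)
qed

lemma Lsym_mod_eq:
  assumes "r < 3*m" "c < 3*m" "0 < Lsym m r c"
    and "(r div m, c div m) \<in> {(1,2),(2,1)} \<Longrightarrow> Lsym m r c < m"
  shows "Lsym m r c mod m = (r + c) mod m"
proof -
  have "m > 0" using assms by simp
  then have "(2*m - 1) mod m = m - 1" "(3*m - 1) mod m = m - 1"
    using mult_minus_one_mod[of 2 m] mult_minus_one_mod[of 3 m] by simp_all
  moreover obtain i j where "i \<in> {0,1,2}" "j \<in> {0,1,2}" "r div m = i" "c div m = j"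
    "Lsym m r c = blockval m (i+1) (j+1) (r mod m) (c mod m)"
    using Lsym_cases assms(1,2) by metis
  ultimately show ?thesis using assms(3,4) \<open>m > 0\<close>
    by (elim insertE emptyE) (simp_all add: blockval_def Let_def mod_add_eq split: if_splits)
qed

lemma mem_Lsq_iff: "(r, c, s) \<in> Lsq m \<longleftrightarrow> r < 3*m \<and> c < 3*m \<and> s = Lsym m r c"
  by (auto simp: Lsq_def)

lemma transversal_mem_Lsq:
  assumes "is_transversal (3*m) (Lsq m) T" "(r, c, s) \<in> T"
  shows "r < 3*m" "c < 3*m" "s = Lsym m r c"
proof -
  have "(r, c, s) \<in> Lsq m" using assms by (auto simp: is_transversal_def)
  then show "r < 3*m" "c < 3*m" "s = Lsym m r c" by (simp_all add: mem_Lsq_iff)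
qed

lemma transversal_symbol_0_exists:
  assumes "is_transversal n L T" "0 < n"
  shows "\<exists>r c. (r, c, 0) \<in> T"
  using assms unfolding is_transversal_def by fastforce

lemma transversal_symbol_0:
  assumes T: "is_transversal (3*m) (Lsq m) T" and avoid: "\<forall>e\<in>T. \<not> in_block m 1 1 e"
    and "(r, c, 0) \<in> T"
  shows "r div m = c div m" "r div m \<noteq> 0" "(r + c) mod m = m - 1"
proof -
  have "r < 3*m" "c < 3*m" "Lsym m r c = 0"
    using transversal_mem_Lsq[OF T \<open>(r, c, 0) \<in> T\<close>] by simp_all
  then have "r div m = c div m \<and> (r div m \<noteq> 0 \<longrightarrow> (r + c) mod m = m - 1)"
    by (rule block_of_Lsym_eq_0)
  moreover have "\<not> in_block m 1 1 (r, c, 0)" using avoid \<open>(r, c, 0) \<in> T\<close> by blast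
  then have "r div m \<noteq> 0 \<or> c div m \<noteq> 0" by (simp add: in_block_def)
  ultimately show "r div m = c div m" "r div m \<noteq> 0" "(r + c) mod m = m - 1" by simp_all
qed

text \<open>The first block row and the first block column each meet T in m entries, disjointly
  since A11 is avoided, and the entry with symbol 0 lies in neither of them nor in A23 \<union> A32.\<close>

lemma card_transversal_A23_A32_le:
  assumes T: "is_transversal (3*m) (Lsq m) T" and avoid: "\<forall>e\<in>T. \<not> in_block m 1 1 e"
  shows "card {e\<in>T. (fst e div m, fst (snd e) div m) \<in> {(1,2),(2,1)}} \<le> m - 1"
    (is "card ?B \<le> _")
proof (cases "m = 0")
  case False
  have fin: "finite T" and card_T: "card T = 3*m" using T by (simp_all add: is_transversal_def)
  obtain r0 c0 where e0: "(r0, c0, 0) \<in> T"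
    using transversal_symbol_0_exists[OF T] False by auto
  have diag0: "r0 div m = c0 div m" "r0 div m \<noteq> 0"
    using transversal_symbol_0[OF T avoid e0] by simp_all
  define col1 where "col1 = {e\<in>T. fst (snd e) \<in> {..<m}}"
  define row1 where "row1 = {e\<in>T. fst e \<in> {..<m}}"
  have card_col1: "card col1 = m"
    using card_bij_betw_preimage[OF transversal_bij_betw_col[OF T], of "{..<m}"] by (simp add: col1_def)
  have card_row1: "card row1 = m"
    using card_bij_betw_preimage[OF transversal_bij_betw_row[OF T], of "{..<m}"] by (simp add: row1_def)
  have "col1 \<inter> row1 = {}" using avoid by (auto simp: col1_def row1_def in_block_def)
  moreover have "(col1 \<union> row1) \<inter> ?B = {}" by (auto simp: col1_def row1_def)
  moreover have "(r0, c0, 0) \<notin> col1 \<union> row1 \<union> ?B" using diag0 by (auto simp: col1_def row1_def)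
  ultimately have "card (col1 \<union> row1 \<union> ?B \<union> {(r0, c0, 0)}) = m + m + card ?B + 1"
    using fin card_col1 card_row1 by (simp add: card_Un_disjoint col1_def row1_def)
  moreover have "card (col1 \<union> row1 \<union> ?B \<union> {(r0, c0, 0)}) \<le> card T"
    using e0 fin by (intro card_mono) (auto simp: col1_def row1_def)
  ultimately show ?thesis using card_T by simp
qed simp

lemma transversal_A23_A32_symbols:
  assumes T: "is_transversal (3*m) (Lsq m) T" and avoid: "\<forall>e\<in>T. \<not> in_block m 1 1 e"
    and e: "(r, c, s) \<in> T" "(r div m, c div m) \<in> {(1,2),(2,1)}"
  shows "0 < s \<and> s < m"
proof -
  define B where "B = {e\<in>T. (fst e div m, fst (snd e) div m) \<in> {(1,2),(2,1)}}"
  define small where "small = {e\<in>T. snd (snd e) \<in> {1..<m}}"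
  have fin: "finite T" using T by (simp add: is_transversal_def)
  have card_small: "card small = m - 1"
    using card_bij_betw_preimage[OF transversal_bij_betw_sym[OF T], of "{1..<m}"]
    by (simp add: small_def subset_eq)
  have small_B: "small \<subseteq> B"
  proof
    fix e assume "e \<in> small"
    then obtain r' c' s' where e': "e = (r', c', s')" "(r', c', s') \<in> T" "0 < s'" "s' < m"
      by (cases e) (auto simp: small_def)
    then have "(r' div m, c' div m) \<in> {(0,0),(1,2),(2,1)}"
      using block_of_Lsym_less transversal_mem_Lsq[OF T e'(2)] by simp
    moreover have "\<not> in_block m 1 1 (r', c', s')" using avoid e'(2) by blast
    ultimately show "e \<in> B" using e' by (auto simp: B_def in_block_def)
  qed
  have "card B \<le> card small"
    using card_transversal_A23_A32_le[OF T avoid] card_small by (simp add: B_def)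
  then have "small = B" using small_B fin by (intro card_seteq) (simp_all add: B_def)
  moreover have "(r, c, s) \<in> B" using e by (simp add: B_def)
  ultimately show ?thesis by (auto simp: small_def)
qed

lemma transversal_avoiding_A11_congruence:
  assumes T: "is_transversal (3*m) (Lsq m) T" and avoid: "\<forall>e\<in>T. \<not> in_block m 1 1 e"
    and e0: "(r0, c0, 0) \<in> T"
  shows "\<forall>e\<in>T. (fst e + fst (snd e) + (if e = (r0, c0, 0) then 1 else 0)) mod m = snd (snd e) mod m"
proof
  fix e assume "e \<in> T"
  obtain r c s where e: "e = (r, c, s)" by (cases e)
  have "0 < m" using transversal_mem_Lsq(1)[OF T e0] by simp
  show "(fst e + fst (snd e) + (if e = (r0, c0, 0) then 1 else 0)) mod m = snd (snd e) mod m"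
  proof (cases "e = (r0, c0, 0)")
    case True
    have "(r0 + c0 + 1) mod m = ((r0 + c0) mod m + 1) mod m"
      by (rule mod_add_left_eq[symmetric])
    also have "\<dots> = 0" using transversal_symbol_0(3)[OF T avoid e0] \<open>0 < m\<close> by simp
    finally show ?thesis using True by simp
  next
    case False
    have "s \<noteq> 0"
    proof
      assume "s = 0"
      then show False
        using False e \<open>e \<in> T\<close> e0
          inj_onD[OF bij_betw_imp_inj_on[OF transversal_bij_betw_sym[OF T]], of e "(r0, c0, 0)"]
        by simp
    qed
    moreover have "r < 3*m" "c < 3*m" "s = Lsym m r c"
      using transversal_mem_Lsq[OF T] \<open>e \<in> T\<close> e by simp_all
    moreover have "(r div m, c div m) \<in> {(1,2),(2,1)} \<Longrightarrow> s < m"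
      using transversal_A23_A32_symbols[OF T avoid] \<open>e \<in> T\<close> e by blast
    ultimately have "s mod m = (r + c) mod m" using Lsym_mod_eq by simp
    with False show ?thesis by (auto simp: e)
  qed
qed

theorem lemma14:
  fixes m :: nat and T :: "(nat \<times> nat \<times> nat) set"
  assumes "odd m" and "m \<ge> 3"
    and "is_transversal (3*m) (Lsq m) T"
  shows "\<exists>e\<in>T. in_block m 1 1 e"
proof (rule ccontr)
  assume "\<not> (\<exists>e\<in>T. in_block m 1 1 e)"
  then have avoid: "\<forall>e\<in>T. \<not> in_block m 1 1 e" by blast
  obtain r0 c0 where e0: "(r0, c0, 0) \<in> T"
    using transversal_symbol_0_exists[OF assms(3)] assms(2) by auto
  have "m = 1"
    using transversal_sum_mod[OF assms(3) dvd_sum_lessThan_three_times[OF assms(1)] e0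
        transversal_avoiding_A11_congruence[OF assms(3) avoid e0]] .
  with assms(2) show False by simp
qed

end
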